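(* Let $X$ be a real Banach space, $h:X\to\mathbb R\cup\{+\infty\}$ proper and lower semicontinuous, and $\bar x$ a global minimizer of $h$. Let $p,q\in(1,+\infty)$ with $p^{-1}+q^{-1}=1$ and $\kappa>0$, and define $$Z:=\bigcup_{x\in X}\{\xi\in X^*:\ \xi\in\partial h(x)\ \text{and}\ \|x-\bar x\|\le\kappa\|\xi\|^{q/p}\}.$$ Then for every $\theta\in(0,1]$, $$h(x)\ge h(\bar x)+\frac12\Big(\frac{\theta}{2\kappa}\Big)^{p/q}\|x-\bar x\|^p\quad\text{for every }x\in\bar x+2\kappa\theta^{-1}J_p^{-1}(\overline Z),$$ where $\overline Z$ is the norm closure of $Z$ in $X^*$.
   Context: The (Fenchel–Moreau) subdifferential of $h$ at $x$ is $\partial h(x):=\{\xi\in X^*: x \text{ is a global minimizer on } X \text{ of } h-\langle\xi,\cdot\rangle\}$ (defined for possibly nonconvex $h$). For $p\in[1,\infty)$ the duality mapping is $J_p(x):=\{\xi\in X^*:\langle\xi,x\rangle=\|\xi\|\|x\|,\ \|\xi\|=\|x\|^{p-1}\}$, and for $A\subset X^*$, $J_p^{-1}(A):=\{x\in X: J_p(x)\cap A\neq\emptyset\}$. *)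

theory Defs
  imports "HOL-Analysis.Analysis"
begin

definition proper_fun :: "('a \<Rightarrow> ereal) \<Rightarrow> bool" where
  "proper_fun h \<longleftrightarrow> (\<forall>x. h x \<noteq> -\<infinity>) \<and> (\<exists>x. h x \<noteq> \<infinity>)"

definition lsc_fun :: "('a::topological_space \<Rightarrow> ereal) \<Rightarrow> bool" where
  "lsc_fun h \<longleftrightarrow> (\<forall>c. closed {x. h x \<le> c})"

text \<open>Fenchel--Moreau subdifferential: x is a global minimizer of h - <xi,.>.\<close>
definition subdiff :: "('a::real_normed_vector \<Rightarrow> ereal) \<Rightarrow> 'a \<Rightarrow> ('a \<Rightarrow>\<^sub>L real) set" where
  "subdiff h x = {\<xi>. \<forall>y. h x - ereal (blinfun_apply \<xi> x) \<le> h y - ereal (blinfun_apply \<xi> y)}"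

definition duality_map :: "real \<Rightarrow> 'a::real_normed_vector \<Rightarrow> ('a \<Rightarrow>\<^sub>L real) set" where
  "duality_map p x = {\<xi>. blinfun_apply \<xi> x = norm \<xi> * norm x \<and> norm \<xi> = norm x powr (p - 1)}"

definition duality_map_inv :: "real \<Rightarrow> ('a::real_normed_vector \<Rightarrow>\<^sub>L real) set \<Rightarrow> 'a set" where
  "duality_map_inv p A = {x. duality_map p x \<inter> A \<noteq> {}}"

end

theory Submission
  imports Defs
begin

text \<open>For a subgradient \<xi> \<in> \<partial>h z, minimality of xbar gives
  h x - h xbar \<ge> h x - h z \<ge> \<xi>(x - z) = \<xi>(x - xbar) - \<xi>(z - xbar), and if \<xi> \<in> Z the last term is
  at most \<kappa> \<parallel>\<xi>\<parallel>^q. The resulting inequality \<xi>(x - xbar) - \<kappa> \<parallel>\<xi>\<parallel>^q \<le> h x - h xbar is closed in \<xi>,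
  so it holds on the closure of Z. Writing x - xbar = t y with t = 2\<kappa>/\<theta> and \<zeta> \<in> J_p(y) in that
  closure, one has \<zeta>(x - xbar) = t \<parallel>y\<parallel>^p and \<parallel>\<zeta>\<parallel>^q = \<parallel>y\<parallel>^p.\<close>

lemma conjugate_exponents:
  fixes p q :: real
  assumes "p > 1" "q > 1" "1 / p + 1 / q = 1"
  shows "q / p = q - 1" and "p / q = p - 1" and "(p - 1) * q = p"
  using assms by (simp_all add: field_simps)

lemma mult_powr_conjugate:
  fixes a p q :: real
  assumes "a \<ge> 0" "p > 1" "q > 1" "1 / p + 1 / q = 1"
  shows "a * a powr (q / p) = a powr q"
proof (cases "a = 0")
  case True
  then show ?thesis by simp
next
  case False
  then have "a * a powr (q / p) = a powr (1 + q / p)"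
    using assms(1) by (simp add: powr_add)
  also have "1 + q / p = q"
    using conjugate_exponents[OF assms(2-4)] by simp
  finally show ?thesis .
qed

lemma duality_map_apply:
  fixes y :: "'a::real_normed_vector"
  assumes "\<zeta> \<in> duality_map p y"
  shows "blinfun_apply \<zeta> y = norm y powr p"
proof (cases "y = 0")
  case True
  then show ?thesis using assms by (simp add: duality_map_def)
next
  case False
  then have "blinfun_apply \<zeta> y = norm y powr (p - 1) * norm y powr 1"
    using assms by (simp add: duality_map_def)
  also have "\<dots> = norm y powr (p - 1 + 1)"
    using False by (simp only: powr_add)
  finally show ?thesis by simp
qed

lemma duality_map_norm_powr_conjugate:
  fixes y :: "'a::real_normed_vector"
  assumes "\<zeta> \<in> duality_map p y" "p > 1" "q > 1" "1 / p + 1 / q = 1"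
  shows "norm \<zeta> powr q = norm y powr p"
  using assms conjugate_exponents(3)[OF assms(2-4)] by (simp add: duality_map_def powr_powr)

lemma subdiff_minimizer_bound:
  fixes h :: "'a::real_normed_vector \<Rightarrow> ereal"
  assumes "\<xi> \<in> subdiff h z" "\<forall>y. h xbar \<le> h y" "h xbar = ereal r" "h x = ereal s"
  shows "blinfun_apply \<xi> (x - xbar) - blinfun_apply \<xi> (z - xbar) \<le> s - r"
proof -
  have "h xbar - ereal (blinfun_apply \<xi> z) \<le> h z - ereal (blinfun_apply \<xi> z)"
    using assms(2) by (simp add: ereal_minus_mono)
  also have "\<dots> \<le> h x - ereal (blinfun_apply \<xi> x)"
    using assms(1) by (simp add: subdiff_def)
  finally have "r - blinfun_apply \<xi> z \<le> s - blinfun_apply \<xi> x"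
    using assms(3,4) by simp
  then show ?thesis
    by (simp add: blinfun.diff_right)
qed

lemma blinfun_apply_le_powr_conjugate:
  fixes \<xi> :: "'a::real_normed_vector \<Rightarrow>\<^sub>L real"
  assumes "norm v \<le> \<kappa> * norm \<xi> powr (q / p)" "p > 1" "q > 1" "1 / p + 1 / q = 1"
  shows "blinfun_apply \<xi> v \<le> \<kappa> * norm \<xi> powr q"
proof -
  have "blinfun_apply \<xi> v \<le> norm \<xi> * norm v"
    by (metis abs_le_D1 norm_blinfun real_norm_def)
  also have "\<dots> \<le> norm \<xi> * (\<kappa> * norm \<xi> powr (q / p))"
    using assms(1) by (simp add: mult_left_mono)
  also have "\<dots> = \<kappa> * norm \<xi> powr q"
    using mult_powr_conjugate[OF norm_ge_zero assms(2-4), of \<xi>] by (metis mult.left_commute)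
  finally show ?thesis .
qed

lemma closed_dual_sublevel:
  fixes v :: "'a::real_normed_vector"
  assumes "q > 0"
  shows "closed {\<xi>::'a \<Rightarrow>\<^sub>L real. blinfun_apply \<xi> v - k * norm \<xi> powr q \<le> c}"
proof -
  have "continuous_on UNIV (\<lambda>\<xi>::'a \<Rightarrow>\<^sub>L real. norm \<xi> powr q)"
    by (rule continuous_on_powr') (use assms in \<open>auto intro: continuous_intros\<close>)
  then have "continuous_on UNIV (\<lambda>\<xi>::'a \<Rightarrow>\<^sub>L real. blinfun_apply \<xi> v - k * norm \<xi> powr q)"
    by (intro continuous_on_diff continuous_on_mult_left) (auto intro: continuous_intros)
  then show ?thesis
    by (intro closed_Collect_le continuous_on_const)
qed

lemma closure_subgradients_bound:
  fixes h :: "'a::real_normed_vector \<Rightarrow> ereal"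
  assumes "\<forall>y. h xbar \<le> h y" "h xbar = ereal r" "h x = ereal s"
    and "p > 1" "q > 1" "1 / p + 1 / q = 1"
    and "Z = (\<Union>z. {\<xi>. \<xi> \<in> subdiff h z \<and> norm (z - xbar) \<le> \<kappa> * norm \<xi> powr (q / p)})"
    and "\<zeta> \<in> closure Z"
  shows "blinfun_apply \<zeta> (x - xbar) - \<kappa> * norm \<zeta> powr q \<le> s - r"
proof -
  let ?S = "{\<xi>. blinfun_apply \<xi> (x - xbar) - \<kappa> * norm \<xi> powr q \<le> s - r}"
  have "Z \<subseteq> ?S"
  proof
    fix \<xi> assume "\<xi> \<in> Z"
    then obtain z where "\<xi> \<in> subdiff h z" "norm (z - xbar) \<le> \<kappa> * norm \<xi> powr (q / p)"
      using assms(7) by auto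
    then show "\<xi> \<in> ?S"
      using subdiff_minimizer_bound[OF _ assms(1-3)] blinfun_apply_le_powr_conjugate[OF _ assms(4-6)]
      by fastforce
  qed
  moreover have "closed ?S"
    using assms(5) by (intro closed_dual_sublevel) simp
  ultimately have "closure Z \<subseteq> ?S"
    by (rule closure_minimal)
  then show ?thesis
    using assms(8) by auto
qed

lemma inverse_powr_scale:
  fixes t a p :: real
  assumes "t > 0" "a \<ge> 0"
  shows "(1 / t) powr (p - 1) * (t * a) powr p = t * a powr p"
proof -
  have "(1 / t) powr (p - 1) * (t * a) powr p = (1 / t) powr (p - 1) * t powr (p - 1) * t * a powr p"
    using assms by (simp add: powr_mult powr_diff)
  also have "(1 / t) powr (p - 1) * t powr (p - 1) = 1"
    using assms by (simp flip: powr_mult)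
  finally show ?thesis by simp
qed

theorem lemma2p2:
  fixes h :: "'a::banach \<Rightarrow> ereal" and xbar :: 'a and p q \<kappa> \<theta> :: real
    and Z :: "('a \<Rightarrow>\<^sub>L real) set"
  assumes "proper_fun h" and "lsc_fun h"
    and "\<forall>y. h xbar \<le> h y"
    and "p > 1" and "q > 1" and "1 / p + 1 / q = 1" and "\<kappa> > 0"
    and "Z = (\<Union>x. {\<xi>. \<xi> \<in> subdiff h x \<and> norm (x - xbar) \<le> \<kappa> * norm \<xi> powr (q / p)})"
    and "0 < \<theta>" and "\<theta> \<le> 1"
    and "x \<in> (\<lambda>y. xbar + (2 * \<kappa> / \<theta>) *\<^sub>R y) ` duality_map_inv p (closure Z)"
  shows "h x \<ge> h xbar + ereal ((1 / 2) * (\<theta> / (2 * \<kappa>)) powr (p / q) * norm (x - xbar) powr p)"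
proof (cases "h x = \<infinity>")
  case False
  define t where "t = 2 * \<kappa> / \<theta>"
  have "t > 0" "\<kappa> \<le> t / 2" "\<theta> / (2 * \<kappa>) = 1 / t"
    using assms(7,9,10) by (auto simp: t_def field_simps)
  obtain r where r: "h xbar = ereal r"
    using assms(1,3) unfolding proper_fun_def by (cases "h xbar") (auto simp: top_unique)
  obtain s where s: "h x = ereal s"
    using assms(1) False unfolding proper_fun_def by (cases "h x") auto
  obtain y \<zeta> where x: "x = xbar + t *\<^sub>R y" and \<zeta>: "\<zeta> \<in> closure Z" "\<zeta> \<in> duality_map p y"
    using assms(11) unfolding duality_map_inv_def t_def by blast
  have "blinfun_apply \<zeta> (x - xbar) - \<kappa> * norm \<zeta> powr q \<le> s - r"
    using closure_subgradients_bound[OF assms(3) r s assms(4-6,8) \<zeta>(1)] .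
  then have "(t - \<kappa>) * norm y powr p \<le> s - r"
    using duality_map_apply[OF \<zeta>(2)] duality_map_norm_powr_conjugate[OF \<zeta>(2) assms(4-6)] x
    by (simp add: blinfun.scaleR_right algebra_simps)
  moreover have "(1 / 2) * (\<theta> / (2 * \<kappa>)) powr (p / q) * norm (x - xbar) powr p = t / 2 * norm y powr p"
    using inverse_powr_scale[of t "norm y" p] conjugate_exponents(2)[OF assms(4-6)]
      \<open>t > 0\<close> \<open>\<theta> / (2 * \<kappa>) = 1 / t\<close> x by simp
  moreover have "t / 2 * norm y powr p \<le> (t - \<kappa>) * norm y powr p"
    using \<open>\<kappa> \<le> t / 2\<close> by (intro mult_right_mono) auto
  ultimately show ?thesis
    using r s by simp
qed simp

end
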